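(* Let $T$ be a finite rooted tree in which every inner node has at least two children, with node set $V$ and leaf set $L$. Let $A,B$ be two disjoint subsets of $L$ and let $S,S'\subseteq V\setminus L$. If $(A,B)$ identifies both $S$ and $S'$, then $S=S'$.
   Context: A pair $(\pi,\sigma)$ of injective maps from $S\subseteq V\setminus L$ to $L$ identifies $S$ if for each $s\in S$, $s$ is the least common ancestor of $\pi(s)$ and $\sigma(s)$ (every node is its own ancestor). For $s\in S$, a node $x$ is $s$-requested in $(\pi,\sigma)$ if $x$ lies on the path of $T$ from $\pi(s)$ to $\sigma(s)$; the pair has unique request if every node is $s$-requested for at most one $s\in S$. A pair $(A,B)$ of disjoint subsets of $L$ identifies $S$ if there is a pair $(\pi,\sigma)$ of injective maps $S\to L$ identifying $S$ with unique request such that $\pi(S)=A$ and $\sigma(S)=B$. *)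

theory Defs
  imports Main
begin

definition rooted_tree :: "'a set \<Rightarrow> 'a \<Rightarrow> ('a \<Rightarrow> 'a) \<Rightarrow> bool" where
  "rooted_tree V r parent \<longleftrightarrow> finite V \<and> r \<in> V \<and> parent r = r \<and>
     (\<forall>v\<in>V. parent v \<in> V) \<and> (\<forall>v\<in>V. \<exists>k. (parent ^^ k) v = r)"

definition children :: "'a set \<Rightarrow> ('a \<Rightarrow> 'a) \<Rightarrow> 'a \<Rightarrow> 'a set" where
  "children V parent x = {y \<in> V. y \<noteq> x \<and> parent y = x}"

definition leaves :: "'a set \<Rightarrow> ('a \<Rightarrow> 'a) \<Rightarrow> 'a set" where
  "leaves V parent = {x \<in> V. children V parent x = {}}"

definition full_branching :: "'a set \<Rightarrow> ('a \<Rightarrow> 'a) \<Rightarrow> bool" where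
  "full_branching V parent \<longleftrightarrow>
     (\<forall>x \<in> V - leaves V parent. card (children V parent x) \<ge> 2)"

text \<open>x is an ancestor of y (every node is its own ancestor).\<close>
definition anc :: "('a \<Rightarrow> 'a) \<Rightarrow> 'a \<Rightarrow> 'a \<Rightarrow> bool" where
  "anc parent x y \<longleftrightarrow> (\<exists>k. (parent ^^ k) y = x)"

definition is_lca :: "('a \<Rightarrow> 'a) \<Rightarrow> 'a \<Rightarrow> 'a \<Rightarrow> 'a \<Rightarrow> bool" where
  "is_lca parent s a b \<longleftrightarrow> anc parent s a \<and> anc parent s b \<and>
     (\<forall>c. anc parent c a \<and> anc parent c b \<longrightarrow> anc parent c s)"

definition tree_path :: "'a set \<Rightarrow> ('a \<Rightarrow> 'a) \<Rightarrow> 'a \<Rightarrow> 'a \<Rightarrow> 'a set" where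
  "tree_path V parent a b = {x \<in> V. (anc parent x a \<or> anc parent x b) \<and>
     (\<forall>c. anc parent c a \<and> anc parent c b \<longrightarrow> anc parent c x)}"

definition maps_identify_unique :: "'a set \<Rightarrow> ('a \<Rightarrow> 'a) \<Rightarrow> 'a set \<Rightarrow> ('a \<Rightarrow> 'a) \<Rightarrow> ('a \<Rightarrow> 'a) \<Rightarrow> bool" where
  "maps_identify_unique V parent S \<pi> \<sigma> \<longleftrightarrow>
     inj_on \<pi> S \<and> inj_on \<sigma> S \<and>
     \<pi> ` S \<subseteq> leaves V parent \<and> \<sigma> ` S \<subseteq> leaves V parent \<and>
     (\<forall>s\<in>S. is_lca parent s (\<pi> s) (\<sigma> s)) \<and>
     (\<forall>x s1 s2. s1 \<in> S \<and> s2 \<in> S \<and> x \<in> tree_path V parent (\<pi> s1) (\<sigma> s1) \<and>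
        x \<in> tree_path V parent (\<pi> s2) (\<sigma> s2) \<longrightarrow> s1 = s2)"

definition pair_identifies :: "'a set \<Rightarrow> ('a \<Rightarrow> 'a) \<Rightarrow> 'a set \<Rightarrow> 'a set \<Rightarrow> 'a set \<Rightarrow> bool" where
  "pair_identifies V parent A B S \<longleftrightarrow>
     (\<exists>\<pi> \<sigma>. maps_identify_unique V parent S \<pi> \<sigma> \<and> \<pi> ` S = A \<and> \<sigma> ` S = B)"

end

theory Submission
  imports Defs
begin

text \<open>Let \<open>(\<pi>, \<sigma>)\<close> identify \<open>S\<close> with unique request, \<open>\<pi> ` S = A\<close> and \<open>\<sigma> ` S = B\<close>, and fix a node \<open>c\<close>.
  Every \<open>s \<in> S\<close> below \<open>c\<close> puts one leaf of \<open>A\<close> and one of \<open>B\<close> below \<open>c\<close>. An \<open>s\<close> not below \<open>c\<close>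
  puts a leaf below \<open>c\<close> only if its path passes through \<open>c\<close>, and by unique request at most one
  such \<open>s\<close> exists. So the subtree of \<open>c\<close> contains more leaves of \<open>A\<close> than of \<open>B\<close> iff some \<open>s\<close>
  above \<open>c\<close> has \<open>\<pi> s\<close> below \<open>c\<close>. Consequently \<open>v \<in> S\<close> iff \<open>v\<close> has one child whose subtree
  contains more leaves of \<open>A\<close> than of \<open>B\<close> and another child for which the opposite holds, which
  is a condition on \<open>(A, B)\<close> alone.\<close>

lemma funpow_fixpoint: "f x = x \<Longrightarrow> (f ^^ n) x = x"
  by (induction n) auto

lemma anc_refl: "anc p x x"
  unfolding anc_def by (rule exI[of _ 0]) simp

lemma anc_parent: "anc p (p x) x"
  unfolding anc_def by (rule exI[of _ 1]) simp

lemma anc_trans: "anc p x y \<Longrightarrow> anc p y z \<Longrightarrow> anc p x z"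
  unfolding anc_def by (metis comp_apply funpow_add)

lemma anc_linear:
  assumes "anc p x z" "anc p y z"
  shows "anc p x y \<or> anc p y x"
proof -
  obtain i j where i: "(p ^^ i) z = x" and j: "(p ^^ j) z = y"
    using assms unfolding anc_def by blast
  show ?thesis
  proof (cases "i \<le> j")
    case True
    then have "(p ^^ (j - i)) x = y"
      using i j by (metis comp_apply funpow_add le_add_diff_inverse2)
    then show ?thesis unfolding anc_def by blast
  next
    case False
    then have "(p ^^ (i - j)) y = x"
      using i j by (metis comp_apply funpow_add le_add_diff_inverse2 nat_le_linear)
    then show ?thesis unfolding anc_def by blast
  qed
qed

lemma anc_of_parent: "anc p x y \<Longrightarrow> x \<noteq> y \<Longrightarrow> anc p x (p y)"
  unfolding anc_def by (metis funpow_0 funpow_Suc_right comp_apply not0_implies_Suc)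

lemma child_on_anc_path:
  "anc p x y \<Longrightarrow> x \<noteq> y \<Longrightarrow> \<exists>c. p c = x \<and> c \<noteq> x \<and> anc p c y"
proof -
  have "(p ^^ k) y = x \<Longrightarrow> x \<noteq> y \<Longrightarrow> \<exists>c. p c = x \<and> c \<noteq> x \<and> anc p c y" for k
  proof (induction k arbitrary: x)
    case 0
    then show ?case by simp
  next
    case (Suc k)
    show ?case
    proof (cases "(p ^^ k) y = x")
      case True
      then show ?thesis using Suc by blast
    next
      case False
      then show ?thesis using Suc.prems unfolding anc_def by auto
    qed
  qed
  then show "anc p x y \<Longrightarrow> x \<noteq> y \<Longrightarrow> ?thesis" unfolding anc_def by blast
qed

lemma anc_in_tree:
  assumes "rooted_tree V r p" and "anc p x y" and "y \<in> V"
  shows "x \<in> V"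
proof -
  obtain k where "(p ^^ k) y = x"
    using \<open>anc p x y\<close> unfolding anc_def by blast
  moreover have "(p ^^ k) y \<in> V"
    using assms(1,3) unfolding rooted_tree_def by (induction k) auto
  ultimately show ?thesis by simp
qed

text \<open>The root rules out cycles: iterating a cycle through \<open>y\<close> reaches \<open>r\<close>, which \<open>p\<close> fixes.\<close>
lemma anc_antisym:
  assumes tree: "rooted_tree V r p" and "y \<in> V" and "anc p x y" and "anc p y x"
  shows "x = y"
proof -
  obtain i j where i: "(p ^^ i) y = x" and j: "(p ^^ j) x = y"
    using assms(3,4) unfolding anc_def by blast
  have root_fixed: "(p ^^ k) r = r" for k
    using tree funpow_fixpoint unfolding rooted_tree_def by metis
  obtain n where n: "(p ^^ n) y = r"
    using tree \<open>y \<in> V\<close> unfolding rooted_tree_def by blast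
  show ?thesis
  proof (cases "j + i = 0")
    case True
    then show ?thesis using i by simp
  next
    case False
    then have "n \<le> (j + i) * n"
      by auto
    have "(p ^^ (j + i)) y = y"
      using i j by (simp add: funpow_add)
    then have "y = ((p ^^ (j + i)) ^^ n) y"
      by (simp add: funpow_fixpoint)
    also have "\<dots> = (p ^^ (((j + i) * n - n) + n)) y"
      using \<open>n \<le> (j + i) * n\<close> by (simp add: funpow_mult)
    also have "\<dots> = (p ^^ ((j + i) * n - n)) ((p ^^ n) y)"
      by (simp add: funpow_add)
    also have "\<dots> = r"
      using n root_fixed by simp
    finally show ?thesis
      using i root_fixed by simp
  qed
qed

lemma is_lca_commute: "is_lca p s a b \<longleftrightarrow> is_lca p s b a"
  unfolding is_lca_def by blast

lemma tree_path_commute: "tree_path V p a b = tree_path V p b a"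
  unfolding tree_path_def by blast

lemma tree_path_eq:
  assumes "is_lca p s a b"
  shows "tree_path V p a b = {x \<in> V. (anc p x a \<or> anc p x b) \<and> anc p s x}"
proof (intro equalityI subsetI)
  fix x
  assume "x \<in> tree_path V p a b"
  then show "x \<in> {x \<in> V. (anc p x a \<or> anc p x b) \<and> anc p s x}"
    using assms unfolding is_lca_def tree_path_def by blast
next
  fix x
  assume x: "x \<in> {x \<in> V. (anc p x a \<or> anc p x b) \<and> anc p s x}"
  have "anc p c x" if "anc p c a" and "anc p c b" for c
    using assms that anc_trans[of p c s x] x unfolding is_lca_def by blast
  then show "x \<in> tree_path V p a b"
    using x unfolding tree_path_def by blast
qed

lemma crossing_in_tree_path:
  assumes tree: "rooted_tree V r p" and lca: "is_lca p s a b" and "a \<in> V" and "b \<in> V"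
    and below: "anc p c a \<or> anc p c b" and "\<not> anc p c s"
  shows "c \<in> tree_path V p a b"
proof -
  have "anc p s c"
    using below anc_linear[of p c a s] anc_linear[of p c b s] lca \<open>\<not> anc p c s\<close>
    unfolding is_lca_def by blast
  moreover have "c \<in> V"
    using below anc_in_tree[OF tree] \<open>a \<in> V\<close> \<open>b \<in> V\<close> by blast
  ultimately show ?thesis
    using below unfolding tree_path_eq[OF lca] by blast
qed

lemma parent_in_tree_path:
  assumes tree: "rooted_tree V r p" and lca: "is_lca p s a b"
    and x: "x \<in> tree_path V p a b" and "x \<noteq> s"
  shows "p x \<in> tree_path V p a b"
proof -
  have "x \<in> V" and below: "anc p x a \<or> anc p x b" and "anc p s x"
    using x unfolding tree_path_eq[OF lca] by blast+
  have "p x \<in> V"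
    using anc_in_tree[OF tree anc_parent \<open>x \<in> V\<close>] .
  moreover have "anc p (p x) a \<or> anc p (p x) b"
    using below anc_trans[OF anc_parent[of p x]] by blast
  moreover have "anc p s (p x)"
    using anc_of_parent[OF \<open>anc p s x\<close>] \<open>x \<noteq> s\<close> by metis
  ultimately show ?thesis
    unfolding tree_path_eq[OF lca] by simp
qed

lemma maps_identify_uniqueD:
  assumes "maps_identify_unique V p S \<pi> \<sigma>" and "s \<in> S"
  shows "is_lca p s (\<pi> s) (\<sigma> s)" and "\<pi> s \<in> V" and "\<sigma> s \<in> V"
  using assms unfolding maps_identify_unique_def leaves_def by blast+

lemma maps_identify_unique_request:
  assumes "maps_identify_unique V p S \<pi> \<sigma>" and "s \<in> S" and "t \<in> S"
    and "x \<in> tree_path V p (\<pi> s) (\<sigma> s)" and "x \<in> tree_path V p (\<pi> t) (\<sigma> t)"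
  shows "s = t"
  using assms unfolding maps_identify_unique_def by blast

lemma maps_identify_unique_swap:
  "maps_identify_unique V p S \<pi> \<sigma> \<Longrightarrow> maps_identify_unique V p S \<sigma> \<pi>"
  unfolding maps_identify_unique_def by (metis is_lca_commute tree_path_commute)

lemma card_image_inter_Collect:
  assumes "finite S" and "inj_on f S" and mono: "\<forall>s\<in>S. P s \<longrightarrow> P (f s)"
  shows "card (f ` S \<inter> Collect P) = card {s \<in> S. P s} + card {s \<in> S. \<not> P s \<and> P (f s)}"
proof -
  have "f ` S \<inter> Collect P = f ` {s \<in> S. P (f s)}" by blast
  then have "card (f ` S \<inter> Collect P) = card {s \<in> S. P (f s)}"
    using assms(2) by (simp add: card_image inj_on_subset)
  also have "{s \<in> S. P (f s)} = {s \<in> S. P s} \<union> {s \<in> S. \<not> P s \<and> P (f s)}"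
    using mono by blast
  also have "card \<dots> = card {s \<in> S. P s} + card {s \<in> S. \<not> P s \<and> P (f s)}"
    using assms(1) by (intro card_Un_disjoint) auto
  finally show ?thesis .
qed

lemma card_image_inter_Collect_less_iff:
  assumes "finite S" and "inj_on f S" and "inj_on g S"
    and mono: "\<forall>s\<in>S. P s \<longrightarrow> P (f s) \<and> P (g s)"
    and one_sided: "\<forall>s\<in>S. \<forall>t\<in>S. \<not> P s \<and> P (f s) \<longrightarrow> \<not> P t \<and> P (g t) \<longrightarrow> False"
  shows "card (g ` S \<inter> Collect P) < card (f ` S \<inter> Collect P) \<longleftrightarrow> (\<exists>s\<in>S. \<not> P s \<and> P (f s))"
proof -
  define up_f where "up_f = {s \<in> S. \<not> P s \<and> P (f s)}"
  define up_g where "up_g = {s \<in> S. \<not> P s \<and> P (g s)}"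
  have "card (f ` S \<inter> Collect P) = card {s \<in> S. P s} + card up_f"
    and "card (g ` S \<inter> Collect P) = card {s \<in> S. P s} + card up_g"
    unfolding up_f_def up_g_def using assms(1-3) mono by (simp_all add: card_image_inter_Collect)
  then have "card (g ` S \<inter> Collect P) < card (f ` S \<inter> Collect P) \<longleftrightarrow> card up_g < card up_f"
    by simp
  also have "\<dots> \<longleftrightarrow> up_f \<noteq> {}"
  proof
    assume "card up_g < card up_f"
    then show "up_f \<noteq> {}" by auto
  next
    assume "up_f \<noteq> {}"
    then have "up_g = {}"
      using one_sided unfolding up_f_def up_g_def by blast
    moreover have "card up_f > 0"
      using \<open>up_f \<noteq> {}\<close> \<open>finite S\<close> unfolding up_f_def by (simp add: card_gt_0_iff)
    ultimately show "card up_g < card up_f" by simp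
  qed
  also have "\<dots> \<longleftrightarrow> (\<exists>s\<in>S. \<not> P s \<and> P (f s))"
    unfolding up_f_def by blast
  finally show ?thesis .
qed

definition heavier_below :: "('a \<Rightarrow> 'a) \<Rightarrow> 'a set \<Rightarrow> 'a set \<Rightarrow> 'a \<Rightarrow> bool" where
  "heavier_below p A B c \<longleftrightarrow> card (B \<inter> {x. anc p c x}) < card (A \<inter> {x. anc p c x})"

definition split_node :: "'a set \<Rightarrow> ('a \<Rightarrow> 'a) \<Rightarrow> 'a set \<Rightarrow> 'a set \<Rightarrow> 'a \<Rightarrow> bool" where
  "split_node V p A B v \<longleftrightarrow>
     (\<exists>c1 \<in> children V p v. \<exists>c2 \<in> children V p v. heavier_below p A B c1 \<and> heavier_below p B A c2)"

lemma heavier_below_iff_crossing: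
  assumes tree: "rooted_tree V r p" and "S \<subseteq> V"
    and ident: "maps_identify_unique V p S \<pi> \<sigma>"
  shows "heavier_below p (\<pi> ` S) (\<sigma> ` S) c \<longleftrightarrow> (\<exists>s\<in>S. \<not> anc p c s \<and> anc p c (\<pi> s))"
  unfolding heavier_below_def
proof (rule card_image_inter_Collect_less_iff)
  note lca = maps_identify_uniqueD(1)[OF ident] and in_V = maps_identify_uniqueD(2,3)[OF ident]
  show "finite S"
    using tree \<open>S \<subseteq> V\<close> finite_subset unfolding rooted_tree_def by blast
  show "inj_on \<pi> S" "inj_on \<sigma> S"
    using ident unfolding maps_identify_unique_def by blast+
  show "\<forall>s\<in>S. anc p c s \<longrightarrow> anc p c (\<pi> s) \<and> anc p c (\<sigma> s)"
  proof (intro ballI impI)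
    fix s
    assume "s \<in> S" and "anc p c s"
    then show "anc p c (\<pi> s) \<and> anc p c (\<sigma> s)"
      using lca[OF \<open>s \<in> S\<close>] anc_trans[OF \<open>anc p c s\<close>] unfolding is_lca_def by blast
  qed
  show "\<forall>s\<in>S. \<forall>t\<in>S. \<not> anc p c s \<and> anc p c (\<pi> s) \<longrightarrow> \<not> anc p c t \<and> anc p c (\<sigma> t) \<longrightarrow> False"
  proof (intro ballI impI)
    fix s t
    assume "s \<in> S" "t \<in> S" and s: "\<not> anc p c s \<and> anc p c (\<pi> s)" and t: "\<not> anc p c t \<and> anc p c (\<sigma> t)"
    have "c \<in> tree_path V p (\<pi> s) (\<sigma> s)" and "c \<in> tree_path V p (\<pi> t) (\<sigma> t)"
      using crossing_in_tree_path[OF tree lca in_V] \<open>s \<in> S\<close> \<open>t \<in> S\<close> s t by blast+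
    then have "s = t"
      using maps_identify_unique_request[OF ident \<open>s \<in> S\<close> \<open>t \<in> S\<close>] by blast
    then show False
      using lca[OF \<open>s \<in> S\<close>] s t unfolding is_lca_def by blast
  qed
qed

lemma exists_heavier_child:
  assumes tree: "rooted_tree V r p" and S: "S \<subseteq> V - leaves V p"
    and ident: "maps_identify_unique V p S \<pi> \<sigma>" and "v \<in> S"
  shows "\<exists>c \<in> children V p v. heavier_below p (\<pi> ` S) (\<sigma> ` S) c"
proof -
  have "\<pi> v \<in> leaves V p"
    using ident \<open>v \<in> S\<close> unfolding maps_identify_unique_def by blast
  then have "v \<noteq> \<pi> v"
    using S \<open>v \<in> S\<close> by auto
  moreover have "anc p v (\<pi> v)"
    using maps_identify_uniqueD(1)[OF ident \<open>v \<in> S\<close>] unfolding is_lca_def by blast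
  ultimately obtain c where c: "p c = v" "c \<noteq> v" "anc p c (\<pi> v)"
    using child_on_anc_path by metis
  have "c \<in> V"
    using anc_in_tree[OF tree c(3) maps_identify_uniqueD(2)[OF ident \<open>v \<in> S\<close>]] .
  then have "c \<in> children V p v"
    using c(1,2) unfolding children_def by blast
  have "\<not> anc p c v"
    using anc_antisym[OF tree \<open>c \<in> V\<close>] anc_parent[of p c] c(1,2) by metis
  moreover have "S \<subseteq> V"
    using S by blast
  ultimately have "heavier_below p (\<pi> ` S) (\<sigma> ` S) c"
    using heavier_below_iff_crossing[OF tree _ ident, of c] \<open>v \<in> S\<close> c(1,3) by blast
  with \<open>c \<in> children V p v\<close> show ?thesis by blast
qed

lemma mem_if_split_node:
  assumes tree: "rooted_tree V r p" and "S \<subseteq> V" and ident: "maps_identify_unique V p S \<pi> \<sigma>"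
    and "v \<in> V" and "split_node V p (\<pi> ` S) (\<sigma> ` S) v"
  shows "v \<in> S"
proof -
  note lca = maps_identify_uniqueD(1)[OF ident] and in_V = maps_identify_uniqueD(2,3)[OF ident]
  obtain c1 c2 where c: "p c1 = v" "p c2 = v"
    and heavy: "heavier_below p (\<pi> ` S) (\<sigma> ` S) c1" "heavier_below p (\<sigma> ` S) (\<pi> ` S) c2"
    using \<open>split_node V p (\<pi> ` S) (\<sigma> ` S) v\<close> unfolding split_node_def children_def by blast
  obtain s1 where s1: "s1 \<in> S" "\<not> anc p c1 s1" "anc p c1 (\<pi> s1)"
    using heavy(1) heavier_below_iff_crossing[OF tree \<open>S \<subseteq> V\<close> ident] by blast
  obtain s2 where s2: "s2 \<in> S" "\<not> anc p c2 s2" "anc p c2 (\<sigma> s2)"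
    using heavy(2) heavier_below_iff_crossing[OF tree \<open>S \<subseteq> V\<close> maps_identify_unique_swap[OF ident]]
    by blast
  have "c1 \<in> tree_path V p (\<pi> s1) (\<sigma> s1)" and "c2 \<in> tree_path V p (\<pi> s2) (\<sigma> s2)"
    using crossing_in_tree_path[OF tree lca in_V] s1 s2 by blast+
  moreover have "c1 \<noteq> s1" and "c2 \<noteq> s2"
    using s1(2) s2(2) anc_refl by metis+
  ultimately have "p c1 \<in> tree_path V p (\<pi> s1) (\<sigma> s1)" and "p c2 \<in> tree_path V p (\<pi> s2) (\<sigma> s2)"
    using parent_in_tree_path[OF tree lca[OF s1(1)]] parent_in_tree_path[OF tree lca[OF s2(1)]] by blast+
  then have on_paths: "v \<in> tree_path V p (\<pi> s1) (\<sigma> s1)" "v \<in> tree_path V p (\<pi> s2) (\<sigma> s2)"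
    unfolding c by simp_all
  then have "s1 = s2"
    using maps_identify_unique_request[OF ident s1(1) s2(1)] by blast
  have "anc p v (\<pi> s1)"
    using anc_trans[OF anc_parent s1(3)] c(1) by simp
  moreover have "anc p v (\<sigma> s1)"
    using anc_trans[OF anc_parent s2(3)] c(2) \<open>s1 = s2\<close> by simp
  ultimately have "anc p v s1"
    using lca[OF s1(1)] unfolding is_lca_def by blast
  moreover have "anc p s1 v"
    using on_paths(1) unfolding tree_path_eq[OF lca[OF s1(1)]] by blast
  ultimately show "v \<in> S"
    using anc_antisym[OF tree \<open>v \<in> V\<close>] s1(1) by metis
qed

lemma split_node_iff_mem:
  assumes tree: "rooted_tree V r p" and S: "S \<subseteq> V - leaves V p"
    and ident: "maps_identify_unique V p S \<pi> \<sigma>" and "v \<in> V"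
  shows "split_node V p (\<pi> ` S) (\<sigma> ` S) v \<longleftrightarrow> v \<in> S"
proof
  assume "v \<in> S"
  then show "split_node V p (\<pi> ` S) (\<sigma> ` S) v"
    using exists_heavier_child[OF tree S ident] exists_heavier_child[OF tree S maps_identify_unique_swap[OF ident]]
    unfolding split_node_def by blast
next
  show "split_node V p (\<pi> ` S) (\<sigma> ` S) v \<Longrightarrow> v \<in> S"
    using mem_if_split_node[OF tree _ ident \<open>v \<in> V\<close>] S by blast
qed

theorem lemma3p6:
  fixes V :: "'a set" and r :: 'a and parent :: "'a \<Rightarrow> 'a"
    and A B S S' :: "'a set"
  assumes "rooted_tree V r parent"
    and "full_branching V parent"
    and "A \<subseteq> leaves V parent" and "B \<subseteq> leaves V parent" and "A \<inter> B = {}"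
    and "S \<subseteq> V - leaves V parent" and "S' \<subseteq> V - leaves V parent"
    and "pair_identifies V parent A B S"
    and "pair_identifies V parent A B S'"
  shows "S = S'"
proof -
  have characterization: "T = {v \<in> V. split_node V parent A B v}"
    if "T \<subseteq> V - leaves V parent" and "pair_identifies V parent A B T" for T
  proof -
    obtain \<pi> \<sigma> where ident: "maps_identify_unique V parent T \<pi> \<sigma>" and "\<pi> ` T = A" "\<sigma> ` T = B"
      using \<open>pair_identifies V parent A B T\<close> unfolding pair_identifies_def by blast
    then show ?thesis
      using split_node_iff_mem[OF assms(1) that(1) ident] that(1) by blast
  qed
  show ?thesis
    using characterization[OF assms(6,8)] characterization[OF assms(7,9)] by simp
qed

end
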